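(* Let $\beta=\beta_n\ge0$ with $n\beta_n\to0$, and let $(\delta_n)$ be a positive sequence with $\log(\delta_n)/\log n\to0$. Set $b_n=\sqrt{2\log n}-\frac{\log\log n+2\log\delta_n+\log(4\pi)}{2\sqrt{2\log n}}$. Let $k$ be an integer with $1\le k\le n$. Then for $n$ large enough, $$\frac{Z_{n-k,1-\frac{k\beta}{4b_n^2},\beta}}{Z_{n-k,\beta}}\le 4^k,\qquad \frac{Z_{n-k,\beta}}{Z_{n,\beta}}\le\Big(\sqrt{\tfrac{2}{\pi}}\Big)^k.$$
   Context: For $\alpha>0$, $\beta\ge0$, $m\ge1$, $Z_{m,\alpha,\beta}=\int_{\mathbb{R}^m}\exp(-\frac{\alpha}{2}\sum_{i=1}^m\lambda_i^2)\prod_{1\le i<j\le m}|\lambda_i-\lambda_j|^\beta\prod_{i=1}^m\mathrm{d}\lambda_i$, and $Z_{m,\beta}=Z_{m,1,\beta}$. For $m=0$ these are taken to equal $1$. *)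

theory Defs
  imports "HOL-Analysis.Analysis"
begin

text \<open>Points of R^m are rendered as functions nat => real restricted to {..<m},
  with the product Lebesgue measure PiM {..<m} (\<lambda>_. lborel).\<close>

definition selberg_integrand :: "nat \<Rightarrow> real \<Rightarrow> real \<Rightarrow> (nat \<Rightarrow> real) \<Rightarrow> real" where
  "selberg_integrand m \<alpha> \<beta> x =
     exp (- (\<alpha> / 2) * (\<Sum>i<m. (x i)\<^sup>2)) *
     (\<Prod>p\<in>{(i, j). i < j \<and> j < m}. \<bar>x (fst p) - x (snd p)\<bar> powr \<beta>)"

definition Zab :: "nat \<Rightarrow> real \<Rightarrow> real \<Rightarrow> real" where
  "Zab m \<alpha> \<beta> =
     (if m = 0 then 1
      else integral\<^sup>L (PiM {..<m} (\<lambda>_. lborel)) (selberg_integrand m \<alpha> \<beta>))"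

definition Zb :: "nat \<Rightarrow> real \<Rightarrow> real" where
  "Zb m \<beta> = Zab m 1 \<beta>"

definition bseq :: "(nat \<Rightarrow> real) \<Rightarrow> nat \<Rightarrow> real" where
  "bseq \<delta> n = sqrt (2 * ln (real n))
     - (ln (ln (real n)) + 2 * ln (\<delta> n) + ln (4 * pi)) / (2 * sqrt (2 * ln (real n)))"

end

theory Submission
  imports Defs "HOL-Probability.Distributions"
begin

(* Since |u| powr \<beta> = exp (\<beta> ln |u|) \<ge> 1 + \<beta> ln |u| \<ge> 1 - \<beta> L u for an integrable
   majorant L of max 0 (- ln |u|), and a product of factors f_i \<ge> 1 - v_i is at least 1 - \<Sum> v_i,
   integrating out the last coordinate gives Z_{j+1,\<beta>} \<ge> (sqrt (2 pi) - \<beta> j \<integral>L) Z_{j,\<beta>}.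
   Once n \<beta>_n is small, every factor is at least sqrt (pi/2), which gives the second bound.
   The substitution x = y / sqrt \<alpha> gives Z_{m,\<alpha>,\<beta>} = \<alpha> powr (-(m + P \<beta>)/2) Z_{m,\<beta>}, where P \<le> m^2
   is the number of pairs; for \<alpha> = 1 - k \<beta> / (4 b_n^2) with b_n \<ge> 1 and n \<beta>_n \<le> 1 this factor
   is at most exp k. *)

definition inv_sqrt_unit :: "real \<Rightarrow> real" where
  "inv_sqrt_unit u = indicator {0<..1} u * u powr (-1/2)"

lemma integrable_inv_sqrt_unit: "integrable lborel inv_sqrt_unit"
proof -
  have "integrable lebesgue (\<lambda>u. indicat_real {0<..1} u *\<^sub>R u powr (-1/2::real))"
    by (intro nonnegative_absolutely_integrable_1 [unfolded set_integrable_def]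
        integrable_on_powr_from_0') auto
  then have "integrable lebesgue inv_sqrt_unit"
    by (simp add: inv_sqrt_unit_def[abs_def])
  moreover have "inv_sqrt_unit \<in> borel_measurable lborel"
    unfolding inv_sqrt_unit_def by measurable
  ultimately show ?thesis
    using integrable_completion by blast
qed

(* An integrable majorant of max 0 (- ln |u|). *)
definition ln_kernel :: "real \<Rightarrow> real" where
  "ln_kernel u = 2 * (inv_sqrt_unit u + inv_sqrt_unit (- u))"

definition ln_kernel_mass :: real where
  "ln_kernel_mass = (\<integral>u. ln_kernel u \<partial>lborel)"

lemma ln_kernel_nonneg: "0 \<le> ln_kernel u"
  by (simp add: ln_kernel_def inv_sqrt_unit_def indicator_def)

lemma ln_kernel_mass_nonneg: "0 \<le> ln_kernel_mass"
  unfolding ln_kernel_mass_def by (simp add: ln_kernel_nonneg)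

lemma integrable_ln_kernel: "integrable lborel ln_kernel"
proof -
  have "integrable lborel (\<lambda>u. inv_sqrt_unit (0 + (-1) * u))"
    by (rule lborel_integrable_real_affine[OF integrable_inv_sqrt_unit]) simp
  then show ?thesis
    unfolding ln_kernel_def[abs_def] using integrable_inv_sqrt_unit by simp
qed

lemma integrable_ln_kernel_reflect: "integrable lborel (\<lambda>y. ln_kernel (a - y))"
  using lborel_integrable_real_affine[OF integrable_ln_kernel, of "-1" a] by simp

lemma integral_ln_kernel_reflect: "(\<integral>y. ln_kernel (a - y) \<partial>lborel) = ln_kernel_mass"
  using lborel_integral_real_affine[of "-1" ln_kernel a] by (simp add: ln_kernel_mass_def)

lemma ln_abs_ge_neg_ln_kernel:
  assumes "u \<noteq> 0"
  shows "- ln_kernel u \<le> ln \<bar>u\<bar>"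
proof (cases "\<bar>u\<bar> \<le> 1")
  case True
  have u: "0 < \<bar>u\<bar>" using assms by simp
  have "ln_kernel u = 2 / sqrt \<bar>u\<bar>"
    using True u
    by (cases "u > 0") (auto simp: ln_kernel_def inv_sqrt_unit_def powr_minus_divide powr_half_sqrt)
  moreover have "ln (1 / sqrt \<bar>u\<bar>) \<le> 1 / sqrt \<bar>u\<bar> - 1"
    using u by (intro ln_le_minus_one) simp
  moreover have "ln \<bar>u\<bar> = - 2 * ln (1 / sqrt \<bar>u\<bar>)"
    using u by (simp add: ln_div ln_sqrt)
  ultimately show ?thesis by simp
next
  case False
  then show ?thesis using ln_kernel_nonneg[of u] ln_ge_zero[of "\<bar>u\<bar>"] by linarith
qed

lemma abs_powr_ge_one_minus_ln_kernel:
  assumes "u \<noteq> 0" "0 \<le> b"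
  shows "1 - b * ln_kernel u \<le> \<bar>u\<bar> powr b"
proof -
  have "1 - b * ln_kernel u \<le> 1 + b * ln \<bar>u\<bar>"
    using mult_left_mono[OF ln_abs_ge_neg_ln_kernel[OF assms(1)] assms(2)] by simp
  also have "\<dots> \<le> exp (b * ln \<bar>u\<bar>)" by (rule exp_ge_add_one_self)
  also have "\<dots> = \<bar>u\<bar> powr b" using assms(1) by (simp add: powr_def)
  finally show ?thesis .
qed

lemma prod_ge_one_minus_sum:
  fixes f v :: "'a \<Rightarrow> real"
  assumes "finite S" "\<And>i. i \<in> S \<Longrightarrow> 0 \<le> f i" "\<And>i. i \<in> S \<Longrightarrow> 1 - v i \<le> f i"
    "\<And>i. i \<in> S \<Longrightarrow> 0 \<le> v i"
  shows "1 - (\<Sum>i\<in>S. v i) \<le> (\<Prod>i\<in>S. f i)"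
  using assms
proof (induction S rule: finite_induct)
  case empty
  then show ?case by simp
next
  case (insert a S)
  have IH: "1 - (\<Sum>i\<in>S. v i) \<le> (\<Prod>i\<in>S. f i)" using insert by auto
  have P: "0 \<le> (\<Prod>i\<in>S. f i)" using insert by (auto intro: prod_nonneg)
  have fa: "0 \<le> f a" "1 - v a \<le> f a" "0 \<le> v a" using insert by auto
  have Sv: "0 \<le> (\<Sum>i\<in>S. v i)" using insert by (auto intro: sum_nonneg)
  show ?case
  proof (cases "1 - v a - (\<Sum>i\<in>S. v i) \<le> 0")
    case True
    then show ?thesis using insert mult_nonneg_nonneg[OF fa(1) P] by simp
  next
    case False
    then have "0 \<le> 1 - v a" "0 \<le> 1 - (\<Sum>i\<in>S. v i)" using fa Sv by auto
    then have "(1 - v a) * (1 - (\<Sum>i\<in>S. v i)) \<le> f a * (\<Prod>i\<in>S. f i)"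
      using IH fa P by (intro mult_mono) auto
    moreover have "1 - v a - (\<Sum>i\<in>S. v i) \<le> (1 - v a) * (1 - (\<Sum>i\<in>S. v i))"
      using fa Sv by (simp add: algebra_simps)
    ultimately show ?thesis using insert by simp
  qed
qed

lemma ennreal_integral_le_nn_integral:
  fixes f :: "'a \<Rightarrow> real"
  assumes "integrable M f"
  shows "ennreal (integral\<^sup>L M f) \<le> (\<integral>\<^sup>+x. ennreal (f x) \<partial>M)"
proof -
  have pos: "integrable M (\<lambda>x. max 0 (f x))" using assms by auto
  have "integral\<^sup>L M f \<le> integral\<^sup>L M (\<lambda>x. max 0 (f x))"
    using assms pos by (intro integral_mono) auto
  also have "\<dots> = enn2real (\<integral>\<^sup>+x. ennreal (f x) \<partial>M)"
    using pos by (simp add: integral_eq_nn_integral ennreal_max_0)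
  finally show ?thesis
    by (metis enn2real_le_iff ennreal_enn2real_if ennreal_leI linear top_greatest)
qed

lemma has_bochner_integral_gaussian:
  "has_bochner_integral lborel (\<lambda>y::real. exp (- (y\<^sup>2 / 2))) (sqrt (2 * pi))"
proof -
  have "(\<lambda>y::real. exp (- (y\<^sup>2 / 2))) = (\<lambda>y. sqrt (2 * pi) * normal_density 0 1 y)"
    by (auto simp: normal_density_def fun_eq_iff)
  then show ?thesis
    by (simp add: has_bochner_integral_iff)
qed

lemma gaussian_times_prod_abs_powr_ge:
  fixes x :: "nat \<Rightarrow> real"
  assumes "0 \<le> b" "\<And>i. i < j \<Longrightarrow> x i \<noteq> y"
  shows "exp (- (y\<^sup>2 / 2)) - b * (\<Sum>i<j. ln_kernel (x i - y))
           \<le> exp (- (y\<^sup>2 / 2)) * (\<Prod>i<j. \<bar>x i - y\<bar> powr b)"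
proof -
  define S where "S = (\<Sum>i<j. b * ln_kernel (x i - y))"
  have S: "0 \<le> S" unfolding S_def using assms(1) ln_kernel_nonneg by (auto intro: sum_nonneg)
  have "1 - S \<le> (\<Prod>i<j. \<bar>x i - y\<bar> powr b)"
    unfolding S_def using assms abs_powr_ge_one_minus_ln_kernel ln_kernel_nonneg
    by (intro prod_ge_one_minus_sum) auto
  have "exp (- (y\<^sup>2 / 2)) - S \<le> exp (- (y\<^sup>2 / 2)) * (1 - S)"
    using S mult_left_mono[of "exp (- (y\<^sup>2 / 2))" 1 S] by (simp add: algebra_simps)
  also have "\<dots> \<le> exp (- (y\<^sup>2 / 2)) * (\<Prod>i<j. \<bar>x i - y\<bar> powr b)"
    using \<open>1 - S \<le> _\<close> by simp
  finally show ?thesis unfolding S_def by (simp add: sum_distrib_left)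
qed

lemma nn_integral_gaussian_times_prod_abs_powr_ge:
  fixes x :: "nat \<Rightarrow> real"
  assumes "0 \<le> b"
  shows "ennreal (sqrt (2 * pi) - b * real j * ln_kernel_mass)
     \<le> (\<integral>\<^sup>+y. ennreal (exp (- (y\<^sup>2 / 2)) * (\<Prod>i<j. \<bar>x i - y\<bar> powr b)) \<partial>lborel)"
proof -
  define F where "F y = exp (- (y\<^sup>2 / 2)) - b * (\<Sum>i<j. ln_kernel (x i - y))" for y
  have "has_bochner_integral lborel F (sqrt (2 * pi) - b * (\<Sum>i<j. ln_kernel_mass))"
    unfolding F_def[abs_def] using has_bochner_integral_gaussian integrable_ln_kernel_reflect
    by (intro has_bochner_integral_diff has_bochner_integral_mult_right has_bochner_integral_sum)
      (auto simp: has_bochner_integral_iff integral_ln_kernel_reflect)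
  then have "ennreal (sqrt (2 * pi) - b * real j * ln_kernel_mass) \<le> (\<integral>\<^sup>+y. ennreal (F y) \<partial>lborel)"
    using ennreal_integral_le_nn_integral[of lborel F] by (simp add: has_bochner_integral_iff mult.assoc)
  also have "\<dots> \<le> (\<integral>\<^sup>+y. ennreal (exp (- (y\<^sup>2 / 2)) * (\<Prod>i<j. \<bar>x i - y\<bar> powr b)) \<partial>lborel)"
  proof (rule nn_integral_mono_AE)
    have "AE y in lborel. y \<notin> x ` {..<j}"
      by (intro AE_not_in countable_imp_null_set_lborel) auto
    then show "AE y in lborel. ennreal (F y) \<le> ennreal (exp (- (y\<^sup>2 / 2)) * (\<Prod>i<j. \<bar>x i - y\<bar> powr b))"
      unfolding F_def
      by eventually_elim (intro ennreal_leI gaussian_times_prod_abs_powr_ge assms, auto)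
  qed
  finally show ?thesis .
qed

abbreviation index_pairs :: "nat \<Rightarrow> (nat \<times> nat) set" where
  "index_pairs m \<equiv> {(i, j). i < j \<and> j < m}"

lemma finite_index_pairs: "finite (index_pairs m)"
  by (rule finite_subset[of _ "{..<m} \<times> {..<m}"]) auto

lemma card_index_pairs_le: "card (index_pairs m) \<le> m * m"
proof -
  have "card (index_pairs m) \<le> card ({..<m} \<times> {..<m})"
    by (rule card_mono) auto
  then show ?thesis by (simp add: card_cartesian_product)
qed

lemma index_pairs_Suc: "index_pairs (Suc j) = index_pairs j \<union> (\<lambda>i. (i, j)) ` {..<j}"
  by auto

(* Z as an integral in ennreal, which needs no integrability; Zab is its enn2real, so 0 if it is infinite. *)
definition selberg_nn :: "nat \<Rightarrow> real \<Rightarrow> real \<Rightarrow> ennreal" where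
  "selberg_nn m a b = (\<integral>\<^sup>+x. ennreal (selberg_integrand m a b x) \<partial>PiM {..<m} (\<lambda>_. lborel))"

lemma selberg_integrand_nonneg: "0 \<le> selberg_integrand m a b x"
  unfolding selberg_integrand_def by (auto intro!: prod_nonneg mult_nonneg_nonneg)

lemma borel_measurable_selberg_integrand[measurable]:
  "selberg_integrand m a b \<in> borel_measurable (PiM {..<m} (\<lambda>_. lborel))"
proof -
  have "(\<lambda>x. x i) \<in> borel_measurable (PiM {..<m} (\<lambda>_. lborel))" if "i < m" for i
    using measurable_component_singleton[of i "{..<m}" "\<lambda>_. lborel"] that by simp
  then show ?thesis
    unfolding selberg_integrand_def[abs_def]
    by (intro borel_measurable_times borel_measurable_exp borel_measurable_sum
        borel_measurable_prod) auto
qed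

lemma Zab_eq_enn2real_selberg_nn: "Zab m a b = enn2real (selberg_nn m a b)"
proof (cases "m = 0")
  case True
  then show ?thesis by (simp add: Zab_def selberg_nn_def selberg_integrand_def PiM_empty)
next
  case False
  then show ?thesis
    by (simp add: Zab_def selberg_nn_def selberg_integrand_nonneg integral_eq_nn_integral)
qed

lemma selberg_integrand_Suc_upd:
  "selberg_integrand (Suc j) 1 b (x(j := y)) =
     selberg_integrand j 1 b x * (exp (- (y\<^sup>2 / 2)) * (\<Prod>i<j. \<bar>x i - y\<bar> powr b))"
proof -
  have disj: "index_pairs j \<inter> (\<lambda>i. (i, j)) ` {..<j} = {}" by auto
  have "(\<Prod>p\<in>index_pairs (Suc j). \<bar>(x(j := y)) (fst p) - (x(j := y)) (snd p)\<bar> powr b)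
     = (\<Prod>p\<in>index_pairs j. \<bar>x (fst p) - x (snd p)\<bar> powr b) * (\<Prod>i<j. \<bar>x i - y\<bar> powr b)"
    unfolding index_pairs_Suc
    by (subst prod.union_disjoint[OF finite_index_pairs _ disj])
      (auto simp: prod.reindex inj_on_def intro!: prod.cong arg_cong2[where f="(*)"])
  then show ?thesis
    unfolding selberg_integrand_def by (simp add: exp_add[symmetric] algebra_simps)
qed

lemma selberg_nn_Suc_ge:
  assumes "0 \<le> b"
  shows "ennreal (sqrt (2 * pi) - b * real j * ln_kernel_mass) * selberg_nn j 1 b
           \<le> selberg_nn (Suc j) 1 b"
proof -
  interpret product_sigma_finite "\<lambda>_::nat. lborel" by standard
  define c where "c = sqrt (2 * pi) - b * real j * ln_kernel_mass"
  define G where "G x = (\<integral>\<^sup>+y. ennreal (exp (- (y\<^sup>2 / 2)) * (\<Prod>i<j. \<bar>x i - y\<bar> powr b)) \<partial>lborel)"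
    for x :: "nat \<Rightarrow> real"
  have "ennreal c * selberg_nn j 1 b
      = (\<integral>\<^sup>+x. ennreal (selberg_integrand j 1 b x) * ennreal c \<partial>PiM {..<j} (\<lambda>_. lborel))"
    unfolding selberg_nn_def by (subst nn_integral_multc) (auto simp: mult.commute)
  also have "\<dots> \<le> (\<integral>\<^sup>+x. ennreal (selberg_integrand j 1 b x) * G x \<partial>PiM {..<j} (\<lambda>_. lborel))"
    unfolding c_def G_def
    by (intro nn_integral_mono mult_left_mono nn_integral_gaussian_times_prod_abs_powr_ge assms) auto
  also have "\<dots> = (\<integral>\<^sup>+x. (\<integral>\<^sup>+y. ennreal (selberg_integrand (Suc j) 1 b (x(j := y))) \<partial>lborel)
                     \<partial>PiM {..<j} (\<lambda>_. lborel))"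
    unfolding G_def
    by (intro nn_integral_cong, subst nn_integral_cmult[symmetric])
      (auto simp: selberg_integrand_Suc_upd ennreal_mult selberg_integrand_nonneg prod_nonneg)
  also have "\<dots> = selberg_nn (Suc j) 1 b"
    unfolding selberg_nn_def lessThan_Suc
    by (rule product_nn_integral_insert[symmetric]) (auto simp flip: lessThan_Suc)
  finally show ?thesis unfolding c_def .
qed

lemma selberg_nn_iterate_ge:
  assumes "0 \<le> b" "real n * b * ln_kernel_mass \<le> sqrt (2 * pi) - c" "k \<le> n"
  shows "ennreal c ^ k * selberg_nn (n - k) 1 b \<le> selberg_nn n 1 b"
  using assms(3)
proof (induction k)
  case 0
  then show ?case by simp
next
  case (Suc k)
  define j where "j = n - Suc k"
  have j: "j < n" "Suc j = n - k" using Suc.prems unfolding j_def by auto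
  have "b * real j * ln_kernel_mass \<le> real n * b * ln_kernel_mass"
    using j assms(1) ln_kernel_mass_nonneg by (simp add: mult.commute mult_right_mono mult_left_mono)
  then have "ennreal c \<le> ennreal (sqrt (2 * pi) - b * real j * ln_kernel_mass)"
    using assms(2) by (intro ennreal_leI) linarith
  then have "ennreal c ^ Suc k * selberg_nn j 1 b
      \<le> ennreal c ^ k * (ennreal (sqrt (2 * pi) - b * real j * ln_kernel_mass) * selberg_nn j 1 b)"
    unfolding power_Suc2 mult.assoc by (intro mult_left_mono mult_right_mono) auto
  also have "\<dots> \<le> ennreal c ^ k * selberg_nn (n - k) 1 b"
    using selberg_nn_Suc_ge[OF assms(1), of j] j by (simp add: mult_left_mono)
  also have "\<dots> \<le> selberg_nn n 1 b" using Suc by simp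
  finally show ?case unfolding j_def .
qed

lemma enn2real_divide_le:
  assumes "ennreal c * A \<le> B" "0 < c"
  shows "enn2real A / enn2real B \<le> 1 / c"
proof (cases "B = top \<or> enn2real B = 0")
  case True
  then show ?thesis using assms(2) by auto
next
  case False
  then have B: "B < top" "0 < enn2real B"
    by (auto simp: less_top) (metis enn2real_nonneg less_eq_real_def)
  have "c * enn2real A = enn2real (ennreal c * A)"
    using assms(2) by (simp add: enn2real_mult)
  also have "\<dots> \<le> enn2real B"
    using assms(1) B(1) by (intro enn2real_mono) auto
  finally have "enn2real A \<le> enn2real B / c"
    using assms(2) by (simp add: pos_le_divide_eq mult.commute)
  then have "enn2real A / enn2real B \<le> (enn2real B / c) / enn2real B"
    using B(2) by (intro divide_right_mono) auto
  then show ?thesis using B(2) by simp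
qed

lemma Zb_ratio_le:
  assumes "0 \<le> b" "real n * b * ln_kernel_mass \<le> sqrt (2 * pi) - sqrt (pi / 2)" "k \<le> n"
  shows "Zb (n - k) b / Zb n b \<le> sqrt (2 / pi) ^ k"
proof -
  have "ennreal (sqrt (pi / 2) ^ k) * selberg_nn (n - k) 1 b \<le> selberg_nn n 1 b"
    using selberg_nn_iterate_ge[OF assms] by (simp add: ennreal_power)
  then have "Zb (n - k) b / Zb n b \<le> 1 / sqrt (pi / 2) ^ k"
    unfolding Zb_def Zab_eq_enn2real_selberg_nn by (rule enn2real_divide_le) simp
  then show ?thesis by (simp add: real_sqrt_divide power_divide)
qed

lemma nn_integral_lborel_scale_upd:
  fixes c :: real
  assumes "0 < c" "i \<notin> I" "f \<in> borel_measurable (PiM (insert i I) (\<lambda>_. lborel))"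
    "X \<in> space (PiM I (\<lambda>_. lborel))"
  shows "ennreal c * (\<integral>\<^sup>+y. f (X(i := c * y)) \<partial>lborel) = (\<integral>\<^sup>+y. f (X(i := y)) \<partial>lborel)"
proof -
  have "(\<lambda>y. f (X(i := y))) \<in> borel_measurable borel"
    using measurable_comp[OF measurable_component_update[OF assms(4,2)] assms(3)]
    by (simp add: comp_def)
  from nn_integral_real_affine[OF this, of c 0] show ?thesis
    using assms(1) by simp
qed

lemma nn_integral_PiM_lborel_scale:
  fixes c :: real
  assumes "finite I" "0 < c" "f \<in> borel_measurable (PiM I (\<lambda>_. lborel))"
  shows "ennreal (c ^ card I) * (\<integral>\<^sup>+x. f (\<lambda>l\<in>I. c * x l) \<partial>PiM I (\<lambda>_. lborel))
           = (\<integral>\<^sup>+x. f x \<partial>PiM I (\<lambda>_. lborel))"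
  using assms(1,3)
proof (induction I arbitrary: f rule: finite_induct)
  case empty
  then show ?case by (simp add: PiM_empty nn_integral_count_space_finite)
next
  case (insert i I)
  interpret product_sigma_finite "\<lambda>_::'a. lborel" by standard
  note f_meas[measurable] = insert.prems
  define G where "G z = (\<integral>\<^sup>+y. f (z(i := y)) \<partial>lborel)" for z
  have G_meas[measurable]: "G \<in> borel_measurable (PiM I (\<lambda>_. lborel))"
  proof -
    have "(\<lambda>(z, y). f (z(i := y))) \<in> borel_measurable (PiM I (\<lambda>_. lborel) \<Otimes>\<^sub>M lborel)"
      using measurable_comp[OF measurable_add_dim[of i I "\<lambda>_. lborel"] f_meas]
      by (simp add: comp_def case_prod_beta')
    then show ?thesis unfolding G_def by (intro lborel.borel_measurable_nn_integral) simp
  qed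
  have inner: "(\<integral>\<^sup>+y. f (\<lambda>l\<in>insert i I. c * (x(i := y)) l) \<partial>lborel) = ennreal (1 / c) * G (\<lambda>l\<in>I. c * x l)"
    for x :: "'a \<Rightarrow> real"
  proof -
    define X where "X = (\<lambda>l\<in>I. c * x l)"
    have "(\<lambda>l\<in>insert i I. c * (x(i := y)) l) = X(i := c * y)" for y
      using insert(2) by (auto simp: X_def fun_eq_iff)
    moreover have "G X = ennreal c * (\<integral>\<^sup>+y. f (X(i := c * y)) \<partial>lborel)"
      unfolding G_def using assms(2) insert(2) f_meas
      by (rule nn_integral_lborel_scale_upd[symmetric]) (simp add: X_def space_PiM)
    ultimately show ?thesis
      unfolding X_def[symmetric] using assms(2)
      by (simp add: mult.assoc[symmetric] ennreal_mult[symmetric])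
  qed
  have "(\<integral>\<^sup>+x. f (\<lambda>l\<in>insert i I. c * x l) \<partial>PiM (insert i I) (\<lambda>_. lborel))
      = (\<integral>\<^sup>+x. ennreal (1 / c) * G (\<lambda>l\<in>I. c * x l) \<partial>PiM I (\<lambda>_. lborel))"
    by (subst product_nn_integral_insert[OF insert(1,2)]) (measurable, rule nn_integral_cong, rule inner)
  also have "\<dots> = ennreal (1 / c) * (\<integral>\<^sup>+x. G (\<lambda>l\<in>I. c * x l) \<partial>PiM I (\<lambda>_. lborel))"
    by (rule nn_integral_cmult) measurable
  finally have "ennreal (c ^ card (insert i I)) * (\<integral>\<^sup>+x. f (\<lambda>l\<in>insert i I. c * x l) \<partial>PiM (insert i I) (\<lambda>_. lborel))
      = ennreal (c ^ card I) * (\<integral>\<^sup>+x. G (\<lambda>l\<in>I. c * x l) \<partial>PiM I (\<lambda>_. lborel))"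
    using insert(1,2) assms(2) by (simp add: mult.assoc[symmetric] ennreal_mult[symmetric])
  also have "\<dots> = (\<integral>\<^sup>+x. G x \<partial>PiM I (\<lambda>_. lborel))"
    by (rule insert.IH[OF G_meas])
  also have "\<dots> = (\<integral>\<^sup>+x. f x \<partial>PiM (insert i I) (\<lambda>_. lborel))"
    unfolding G_def by (rule product_nn_integral_insert[OF insert(1,2) f_meas, symmetric])
  finally show ?case .
qed

lemma selberg_integrand_scale:
  assumes "0 < a"
  shows "selberg_integrand m a b (\<lambda>l\<in>{..<m}. (1 / sqrt a) * x l)
           = a powr (- (real (card (index_pairs m)) * b / 2)) * selberg_integrand m 1 b x"
proof -
  have sq: "(\<Sum>i<m. ((\<lambda>l\<in>{..<m}. (1 / sqrt a) * x l) i)\<^sup>2) = (\<Sum>i<m. (x i)\<^sup>2) / a"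
    using assms by (simp add: sum_divide_distrib power_divide)
  have factor: "\<bar>x i / sqrt a - x j / sqrt a\<bar> powr b = \<bar>x i - x j\<bar> powr b * a powr (- (b / 2))"
    for i j
  proof -
    have "\<bar>x i / sqrt a - x j / sqrt a\<bar> = \<bar>x i - x j\<bar> / a powr (1 / 2)"
      using assms by (simp add: powr_half_sqrt abs_div field_simps)
    also have "\<dots> powr b = \<bar>x i - x j\<bar> powr b / a powr (b / 2)"
      using assms by (simp add: powr_divide powr_powr)
    finally show ?thesis by (simp add: powr_minus_divide)
  qed
  have "(\<Prod>p\<in>index_pairs m. \<bar>(\<lambda>l\<in>{..<m}. (1 / sqrt a) * x l) (fst p)
                              - (\<lambda>l\<in>{..<m}. (1 / sqrt a) * x l) (snd p)\<bar> powr b)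
      = (\<Prod>p\<in>index_pairs m. \<bar>x (fst p) - x (snd p)\<bar> powr b * a powr (- (b / 2)))"
    by (intro prod.cong) (auto simp: factor)
  also have "\<dots> = (\<Prod>p\<in>index_pairs m. \<bar>x (fst p) - x (snd p)\<bar> powr b)
                    * a powr (- (real (card (index_pairs m)) * b / 2))"
    using assms by (simp add: prod.distrib powr_power)
  finally show ?thesis
    unfolding selberg_integrand_def sq using assms by simp
qed

lemma selberg_nn_scale:
  assumes "0 < a"
  shows "selberg_nn m a b
           = ennreal (a powr (- (real m + real (card (index_pairs m)) * b) / 2)) * selberg_nn m 1 b"
proof -
  define K where "K = a powr (- (real (card (index_pairs m)) * b / 2))"
  have "selberg_nn m a b = ennreal ((1 / sqrt a) ^ m)
      * (\<integral>\<^sup>+x. ennreal (selberg_integrand m a b (\<lambda>l\<in>{..<m}. (1 / sqrt a) * x l)) \<partial>PiM {..<m} (\<lambda>_. lborel))"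
    unfolding selberg_nn_def using assms
    by (subst nn_integral_PiM_lborel_scale[of "{..<m}" "1 / sqrt a", symmetric]) auto
  also have "\<dots> = ennreal ((1 / sqrt a) ^ m)
      * (\<integral>\<^sup>+x. ennreal K * ennreal (selberg_integrand m 1 b x) \<partial>PiM {..<m} (\<lambda>_. lborel))"
    unfolding K_def selberg_integrand_scale[OF assms]
    by (simp add: ennreal_mult selberg_integrand_nonneg)
  also have "\<dots> = ennreal ((1 / sqrt a) ^ m * K) * selberg_nn m 1 b"
    unfolding selberg_nn_def using assms
    by (subst nn_integral_cmult) (auto simp: K_def ennreal_mult mult.assoc)
  also have "(1 / sqrt a) ^ m * K = a powr (- (real m + real (card (index_pairs m)) * b) / 2)"
    using assms
    by (simp add: K_def powr_half_sqrt[symmetric] powr_minus_divide[symmetric] powr_power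
        powr_add[symmetric] field_simps)
  finally show ?thesis .
qed

lemma Zab_scale:
  assumes "0 < a"
  shows "Zab m a b = a powr (- (real m + real (card (index_pairs m)) * b) / 2) * Zb m b"
  unfolding Zb_def Zab_eq_enn2real_selberg_nn selberg_nn_scale[OF assms]
  by (simp add: enn2real_mult)

lemma one_minus_powr_neg_le_exp:
  fixes e t :: real
  assumes "0 \<le> e" "e \<le> 1 / 2" "0 \<le> t"
  shows "(1 - e) powr (- t) \<le> exp (2 * t * e)"
proof -
  have "e * e \<le> e * (1 / 2)" by (rule mult_left_mono[OF assms(2,1)])
  then have "- ln (1 - e) \<le> 2 * e"
    using ln_one_minus_pos_lower_bound[OF assms(1,2)] by (simp add: power2_eq_square)
  then have "t * (- ln (1 - e)) \<le> t * (2 * e)" using assms(3) by (rule mult_left_mono)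
  moreover have "(1 - e) powr (- t) = exp (t * (- ln (1 - e)))"
    using assms(2) by (simp add: powr_def)
  ultimately show ?thesis by (simp add: mult.assoc)
qed

lemma Zab_ratio_le:
  fixes b B :: real
  assumes "0 \<le> b" "real n * b \<le> 1" "1 \<le> B" "k \<le> n"
  shows "Zab (n - k) (1 - real k * b / (4 * B\<^sup>2)) b / Zb (n - k) b \<le> 4 ^ k"
proof -
  define e where "e = real k * b / (4 * B\<^sup>2)"
  define P where "P = card (index_pairs (n - k))"
  define t where "t = (real (n - k) + real P * b) / 2"
  have "1 \<le> B\<^sup>2" using assms(3) by (simp add: one_le_power)
  then have e_le: "e \<le> real k * b / 4"
    unfolding e_def using assms(1) by (intro divide_left_mono) auto
  have kb: "real k * b \<le> real n * b" using assms(1,4) by (intro mult_right_mono) auto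
  have e: "0 \<le> e" "e \<le> 1 / 2"
    using e_le kb assms(1,2) by (simp add: e_def, linarith)
  have "real P \<le> real n * real n"
    using card_index_pairs_le[of "n - k"] mult_le_mono[of "n - k" n "n - k" n]
    unfolding P_def of_nat_mult[symmetric] of_nat_le_iff by linarith
  then have "real P * b \<le> real n * (real n * b)"
    unfolding mult.assoc[symmetric] using assms(1) by (rule mult_right_mono)
  also have "\<dots> \<le> real n" using assms(2) by (simp add: mult_left_le)
  finally have t: "0 \<le> t" "t \<le> real n" using assms(1) by (auto simp: t_def)
  have "2 * t * e \<le> 2 * real n * (real k * b / 4)"
    using t e e_le by (intro mult_mono) auto
  also have "\<dots> = real k * (real n * b) / 2" by simp
  also have "\<dots> \<le> real k" using mult_left_le[OF assms(2), of "real k"] by simp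
  finally have "exp (2 * t * e) \<le> exp 1 ^ k" by (simp add: exp_of_nat_mult[symmetric])
  also have "\<dots> \<le> 4 ^ k" using exp_le by (intro power_mono) auto
  finally have bound: "(1 - e) powr (- t) \<le> 4 ^ k"
    using one_minus_powr_neg_le_exp[OF e t(1)] by linarith
  have "Zab (n - k) (1 - e) b = (1 - e) powr (- t) * Zb (n - k) b"
    using e Zab_scale[of "1 - e" "n - k" b] by (simp add: t_def P_def minus_divide_left)
  then show ?thesis
    using bound unfolding e_def[symmetric]
    by (cases "Zb (n - k) b = 0") auto
qed

lemma bseq_ge_one:
  assumes "32 \<le> ln (real n)" "ln (\<delta> n) \<le> ln (real n) / 8"
  shows "1 \<le> bseq \<delta> n"
proof -
  define L where "L = ln (real n)"
  define r where "r = sqrt (2 * L)"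
  have L: "32 \<le> L" using assms(1) unfolding L_def .
  have r: "0 < r" "r * r = 2 * L" unfolding r_def using L by auto
  have "2 * L \<le> (L / 4)\<^sup>2" using L mult_right_mono[of 32 L L] by (simp add: power2_eq_square)
  then have "r \<le> L / 4" unfolding r_def using L real_sqrt_le_mono by fastforce
  moreover have "ln L \<le> L" using ln_le_minus_one[of L] L by simp
  moreover have "ln (4 * pi) \<le> 15" using ln_le_minus_one[of "4 * pi"] pi_less_4 by simp
  ultimately have "ln L + 2 * ln (\<delta> n) + ln (4 * pi) \<le> (r - 1) * (2 * r)"
    using assms(2) r L unfolding L_def[symmetric] by (simp add: algebra_simps)
  then have "(ln L + 2 * ln (\<delta> n) + ln (4 * pi)) / (2 * r) \<le> r - 1"
    using r by (simp add: divide_le_eq)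
  then show ?thesis unfolding bseq_def L_def[symmetric] r_def[symmetric] by simp
qed

lemma eventually_bseq_ge_one:
  assumes "(\<lambda>n. ln (\<delta> n) / ln (real n)) \<longlonglongrightarrow> 0"
  shows "eventually (\<lambda>n. 1 \<le> bseq \<delta> n) sequentially"
proof -
  have "eventually (\<lambda>n. 32 \<le> ln (real n)) sequentially"
    using filterlim_compose[OF ln_at_top filterlim_real_sequentially] by (simp add: filterlim_at_top)
  moreover have "eventually (\<lambda>n. ln (\<delta> n) / ln (real n) < 1 / 8) sequentially"
    by (rule order_tendstoD(2)[OF assms]) simp
  ultimately show ?thesis
    by eventually_elim (auto intro!: bseq_ge_one simp: pos_divide_less_eq)
qed

theorem lemma2p6:
  fixes \<beta> \<delta> :: "nat \<Rightarrow> real"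
  assumes beta_nonneg: "\<And>n. \<beta> n \<ge> 0"
    and beta_lim: "(\<lambda>n. real n * \<beta> n) \<longlonglongrightarrow> 0"
    and delta_pos: "\<And>n. \<delta> n > 0"
    and delta_lim: "(\<lambda>n. ln (\<delta> n) / ln (real n)) \<longlonglongrightarrow> 0"
  shows "\<exists>N. \<forall>n\<ge>N. \<forall>k::nat. 1 \<le> k \<and> k \<le> n \<longrightarrow>
           Zab (n - k) (1 - real k * \<beta> n / (4 * (bseq \<delta> n)\<^sup>2)) (\<beta> n) / Zb (n - k) (\<beta> n)
             \<le> 4 ^ k
         \<and> Zb (n - k) (\<beta> n) / Zb n (\<beta> n) \<le> (sqrt (2 / pi)) ^ k"
proof -
  define D where "D = sqrt (2 * pi) - sqrt (pi / 2)"
  have "0 < D" unfolding D_def by (simp add: real_sqrt_less_iff)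
  moreover have "(\<lambda>n. real n * \<beta> n * ln_kernel_mass) \<longlonglongrightarrow> 0"
    using beta_lim by (rule tendsto_mult_left_zero)
  ultimately have small_mass: "eventually (\<lambda>n. real n * \<beta> n * ln_kernel_mass < D) sequentially"
    by (rule order_tendstoD(2)[rotated])
  have small: "eventually (\<lambda>n. real n * \<beta> n < 1) sequentially"
    using beta_lim zero_less_one by (rule order_tendstoD(2))
  obtain N where N: "\<And>n. N \<le> n \<Longrightarrow>
      real n * \<beta> n * ln_kernel_mass < D \<and> real n * \<beta> n < 1 \<and> 1 \<le> bseq \<delta> n"
    using eventually_conj[OF small_mass eventually_conj[OF small eventually_bseq_ge_one[OF delta_lim]]]
    unfolding eventually_sequentially by blast
  show ?thesis
  proof (intro exI allI impI conjI)
    fix n k :: nat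
    assume n: "N \<le> n" and k: "1 \<le> k \<and> k \<le> n"
    show "Zab (n - k) (1 - real k * \<beta> n / (4 * (bseq \<delta> n)\<^sup>2)) (\<beta> n) / Zb (n - k) (\<beta> n) \<le> 4 ^ k"
      using N[OF n] k by (intro Zab_ratio_le beta_nonneg) auto
    show "Zb (n - k) (\<beta> n) / Zb n (\<beta> n) \<le> (sqrt (2 / pi)) ^ k"
      using N[OF n] k by (intro Zb_ratio_le beta_nonneg) (auto simp: D_def)
  qed
qed

end
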